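(* Let $U^3$ be the orthogonal sum of three hyperbolic planes and let $\{e_1,f_1\}$ be a standard basis of the first copy $U_1$ of $U$ ($e_1^2=f_1^2=0$, $e_1\cdot f_1=1$). For every integer $d\ge1$, the group $SO^+(U^3)$ is generated by the union $$SO^+_{e_1+df_1}(U^3)\cup SO^+_{de_1+f_1}(U^3)\cup SO^+_{e_1+(d+1)f_1}(U^3)\cup SO^+_{(d+1)e_1+f_1}(U^3).$$
   Context: $SO^+(L)$ is the group of isometries of the lattice $L$ of determinant one preserving the orientation of the positive cone; for $a\in L$, $SO^+_a(L)=\{\varphi\in SO^+(L):\varphi(a)=a\}$. *)

theory Defs
  imports "HOL-Analysis.Analysis" "HOL-Algebra.Generated_Groups"
begin

text \<open>The lattice U^3 = U_1 (+) U_2 (+) U_3 is modelled as int^(3 x 2):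
  the coordinate x$(k,0) is the e_k-coordinate and x$(k,1) the f_k-coordinate
  (k = 0,1,2 indexes the three hyperbolic planes; k = 0 is U_1).\<close>

type_synonym U3 = "int ^ (3 \<times> 2)"
type_synonym U3mat = "int ^ (3 \<times> 2) ^ (3 \<times> 2)"

definition e :: "3 \<Rightarrow> U3" where "e k = axis (k, 0) 1"
definition f :: "3 \<Rightarrow> U3" where "f k = axis (k, 1) 1"

definition bil :: "U3 \<Rightarrow> U3 \<Rightarrow> int" where
  "bil x y = (\<Sum>k\<in>UNIV. x $ (k, 0) * y $ (k, 1) + x $ (k, 1) * y $ (k, 0))"

definition SO_U3 :: "U3mat set" where
  "SO_U3 = {A. (\<forall>x y. bil (A *v x) (A *v y) = bil x y) \<and> det A = 1}"

text \<open>Orientation of the positive cone: W = span{e_k + f_k} is a maximal positive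
  definite subspace (orthogonal basis, squares 2). A preserves the orientation iff
  the composite W --A--> V --orthogonal projection--> W has positive determinant;
  its matrix in the basis e_k+f_k is (bil (w_k) (A w_l) / 2)_{k,l}.\<close>
definition wpos :: "3 \<Rightarrow> U3" where "wpos k = e k + f k"

definition orient_preserving :: "U3mat \<Rightarrow> bool" where
  "orient_preserving A \<longleftrightarrow>
     det ((\<chi> k l. bil (wpos k) (A *v wpos l)) :: int^3^3) > 0"

definition SOplus_U3 :: "U3mat set" where
  "SOplus_U3 = {A \<in> SO_U3. orient_preserving A}"

definition SOplus_stab :: "U3 \<Rightarrow> U3mat set" where
  "SOplus_stab a = {A \<in> SOplus_U3. A *v a = a}"

definition SOplus_group :: "U3mat monoid" where
  "SOplus_group = \<lparr>carrier = SOplus_U3, mult = (**), one = mat 1\<rparr>"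

end

theory Submission
  imports Defs
begin

text \<open>
  Planes are indexed \<open>U\<^sub>0, U\<^sub>1, U\<^sub>2\<close> as in the definitions (\<open>U\<^sub>0\<close> is the \<open>U\<^sub>1\<close> of the
  statement). For isotropic \<open>u\<close> and \<open>x \<bottom> u\<close> the Eichler transformation
  \<open>E(u, x) z = z - (z\<cdot>u) x + (z\<cdot>x) u - q(x) (z\<cdot>u) u\<close> is an isometry,
  \<open>E(u, x) E(u, y) = E(u, x + y)\<close>, and over the reals \<open>t \<mapsto> E(u, t x)\<close> joins it to the
  identity; so the integral ones lie in \<open>SO\<^sup>+\<close>. Call \<open>E(u, x)\<close> elementary if
  \<open>u \<in> {e k, f k}\<close> for some \<open>k \<noteq> 0\<close> and \<open>x \<bottom> U\<^sub>k\<close>.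

  Elementary transformations act transitively on primitive isotropic vectors, by a Euclidean
  algorithm on their coordinates. Moving the images of \<open>e 1, f 1\<close> and then of \<open>e 2, f 2\<close> back
  reduces any \<open>A \<in> SO\<^sup>+\<close> to an element fixing \<open>U\<^sub>1 \<oplus> U\<^sub>2\<close>, hence acting on \<open>U\<^sub>0\<close> by one of
  \<open>\<plusminus>id, \<plusminus>swap\<close>; determinant and orientation leave only the identity. So \<open>SO\<^sup>+\<close> is generated
  by the elementary transformations.

  Finally \<open>E(u, x)\<close> fixes every vector orthogonal to both \<open>u\<close> and \<open>x\<close>. Splitting \<open>x\<close>
  additively into a part orthogonal to \<open>U\<^sub>0\<close> and four parts in \<open>U\<^sub>0\<close>, each orthogonal to one
  of the four given vectors, writes an elementary \<open>E(u, x)\<close> as a product of elements of the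
  four stabilisers.
\<close>

lemma UNIV_3: "(UNIV :: 3 set) = {0, 1, 2}"
proof -
  have "(3::3) = 0" by simp
  then show ?thesis using exhaust_3 by fastforce
qed

lemma prod_UNIV_3: "(\<Prod>k\<in>UNIV. g k) = g 0 * g 1 * g (2::3)"
proof -
  have "(0::3) \<noteq> 1" "(0::3) \<noteq> 2" "(1::3) \<noteq> 2" by simp_all
  then show ?thesis
    unfolding UNIV_3 by (simp add: mult.assoc)
qed

lemma two_cases: "(c::2) = 0 \<or> c = 1"
proof -
  have "(2::2) = 0" by simp
  then show ?thesis using exhaust_2[of c] by auto
qed

lemma exists_shift_nonzero_abs_le:
  fixes a s :: int
  assumes "s \<noteq> 0"
  shows "\<exists>k. a + k * s \<noteq> 0 \<and> \<bar>a + k * s\<bar> \<le> \<bar>s\<bar>"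
proof (cases "a mod s = 0")
  case True
  then have "a + (1 - a div s) * s = s"
    by (simp add: algebra_simps mod_eq_0_iff_dvd)
  then show ?thesis using assms by (intro exI[of _ "1 - a div s"]) simp
next
  case False
  have "a + (- (a div s)) * s = a mod s"
    by (simp add: minus_div_mult_eq_mod[symmetric])
  then show ?thesis using False abs_mod_less[OF assms, of a] by (metis less_imp_le)
qed

definition hyp_form :: "'a::comm_ring_1 ^ ('n::finite \<times> 2) \<Rightarrow> 'a ^ ('n \<times> 2) \<Rightarrow> 'a" where
  "hyp_form x y = (\<Sum>k\<in>UNIV. x $ (k, 0) * y $ (k, 1) + x $ (k, 1) * y $ (k, 0))"

definition hyp_quad :: "'a::comm_ring_1 ^ ('n::finite \<times> 2) \<Rightarrow> 'a" where
  "hyp_quad x = (\<Sum>k\<in>UNIV. x $ (k, 0) * x $ (k, 1))"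

lemma bil_eq_hyp_form: "bil = hyp_form"
  by (simp add: fun_eq_iff bil_def hyp_form_def)

lemma hyp_form_commute: "hyp_form x y = hyp_form y x"
  unfolding hyp_form_def by (simp add: algebra_simps)

lemma hyp_form_add_left: "hyp_form (x + y) z = hyp_form x z + hyp_form y z"
  and hyp_form_add_right: "hyp_form z (x + y) = hyp_form z x + hyp_form z y"
  and hyp_form_diff_left: "hyp_form (x - y) z = hyp_form x z - hyp_form y z"
  and hyp_form_diff_right: "hyp_form z (x - y) = hyp_form z x - hyp_form z y"
  and hyp_form_minus_left: "hyp_form (- x) z = - hyp_form x z"
  and hyp_form_minus_right: "hyp_form z (- x) = - hyp_form z x"
  and hyp_form_smult_left: "hyp_form (c *s x) z = c * hyp_form x z"
  and hyp_form_smult_right: "hyp_form z (c *s x) = c * hyp_form z x"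
  unfolding hyp_form_def
  by (simp_all add: algebra_simps sum.distrib sum_subtractf sum_distrib_left sum_negf)

lemmas hyp_form_linear = hyp_form_add_left hyp_form_add_right hyp_form_diff_left
  hyp_form_diff_right hyp_form_minus_left hyp_form_minus_right hyp_form_smult_left
  hyp_form_smult_right

lemma hyp_form_zero [simp]: "hyp_form 0 z = 0" "hyp_form z 0 = 0"
  unfolding hyp_form_def by simp_all

lemma hyp_quad_zero [simp]: "hyp_quad 0 = 0"
  unfolding hyp_quad_def by simp

lemma hyp_form_sum_right: "hyp_form z (\<Sum>i\<in>S. g i) = (\<Sum>i\<in>S. hyp_form z (g i))"
  unfolding hyp_form_def
  by (simp add: sum_distrib_left sum_distrib_right sum.distrib[symmetric] algebra_simps;
      rule sum.swap)

lemma hyp_form_sum_left: "hyp_form (\<Sum>i\<in>S. g i) z = (\<Sum>i\<in>S. hyp_form (g i) z)"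
  using hyp_form_sum_right[of z g S] by (simp add: hyp_form_commute)

lemma hyp_quad_add: "hyp_quad (x + y) = hyp_quad x + hyp_quad y + hyp_form x y"
  unfolding hyp_quad_def hyp_form_def by (simp add: algebra_simps sum.distrib)

lemma hyp_quad_smult: "hyp_quad (c *s x) = c * c * hyp_quad x"
  unfolding hyp_quad_def by (simp add: algebra_simps sum_distrib_left)

lemma hyp_quad_uminus [simp]: "hyp_quad (- x) = hyp_quad x"
  unfolding hyp_quad_def by simp

lemma hyp_form_self: "hyp_form x x = 2 * hyp_quad x"
  unfolding hyp_quad_def hyp_form_def by (simp add: algebra_simps sum_distrib_left sum.distrib)

lemma hyp_form_axis_right: "hyp_form z (axis (k, c) 1) = z $ (k, 1 - c)"
proof -
  have "hyp_form z (axis (k, c) 1) =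
      (\<Sum>l\<in>UNIV. if l = k then (if c = 1 then z $ (k, 0) else z $ (k, 1)) else 0)"
    unfolding hyp_form_def using two_cases[of c] by (intro sum.cong) (auto simp: axis_def)
  then show ?thesis
    using two_cases[of c] by (elim disjE) (simp_all add: sum.delta)
qed

lemma hyp_form_axis_left: "hyp_form (axis (k, c) 1) z = z $ (k, 1 - c)"
  by (subst hyp_form_commute) (rule hyp_form_axis_right)

lemma hyp_quad_axis: "hyp_quad (axis (k, c) 1) = 0"
  unfolding hyp_quad_def by (rule sum.neutral) (auto simp: axis_def)

lemma matrix_vector_mul_matrix:
  fixes F :: "'a::comm_ring_1 ^ 'n \<Rightarrow> 'a ^ 'm"
  assumes add: "\<And>x y. F (x + y) = F x + F y" and smult: "\<And>c x. F (c *s x) = c *s F x"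
  shows "matrix F *v z = F z"
proof -
  have F_sum: "F (\<Sum>j\<in>S. g j) = (\<Sum>j\<in>S. F (g j))" if "finite S" for S and g :: "'n \<Rightarrow> _"
    using that smult[of 0 0] by (induction S rule: finite_induct) (auto simp: add)
  have "F z = (\<Sum>j\<in>UNIV. z $ j *s F (axis j 1))"
    using F_sum[of UNIV "\<lambda>j. z $ j *s axis j 1"] by (simp add: basis_expansion smult)
  then show ?thesis
    by (simp add: vec_eq_iff matrix_def matrix_vector_mult_def mult.commute)
qed

lemma matrix_vector_mult_axis_component: "(A *v axis j 1) $ i = (A $ i $ j :: 'a::comm_semiring_1)"
  by (simp add: matrix_vector_mult_def axis_def if_distrib sum.delta cong: if_cong)

lemma matrix_vector_mult_smult: "(A :: 'a::comm_semiring_1 ^ 'n ^ 'm) *v (c *s x) = c *s (A *v x)"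
  by (simp add: vec_eq_iff matrix_vector_mult_def sum_distrib_left algebra_simps)

lemma matrix_vector_mult_uminus: "(A :: 'a::comm_ring_1 ^ 'n ^ 'm) *v (- x) = - (A *v x)"
  by (simp add: vec_eq_iff matrix_vector_mult_def sum_negf)

lemma matrix_vector_mult_sum:
  "(A :: 'a::comm_semiring_1 ^ 'n ^ 'm) *v (\<Sum>i\<in>S. g i) = (\<Sum>i\<in>S. A *v g i)"
  by (induction S rule: infinite_finite_induct) (simp_all add: matrix_vector_right_distrib)

definition hyp_isometry :: "'a::comm_ring_1 ^ ('n::finite \<times> 2) ^ ('n \<times> 2) \<Rightarrow> bool" where
  "hyp_isometry A \<longleftrightarrow> (\<forall>x y. hyp_form (A *v x) (A *v y) = hyp_form x y)"

lemma hyp_isometry_mult: "hyp_isometry A \<Longrightarrow> hyp_isometry B \<Longrightarrow> hyp_isometry (A ** B)"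
  by (simp add: hyp_isometry_def matrix_vector_mul_assoc[symmetric])

lemma hyp_isometry_if_basis:
  fixes A :: "'a::comm_ring_1 ^ ('n::finite \<times> 2) ^ ('n \<times> 2)"
  assumes "\<And>i j. hyp_form (A *v axis i 1) (A *v axis j 1) = hyp_form (axis i 1) (axis j 1)"
  shows "hyp_isometry A"
  unfolding hyp_isometry_def
proof (intro allI)
  fix x y
  have expand: "hyp_form (B *v x) (B *v y) =
      (\<Sum>j\<in>UNIV. y $ j * (\<Sum>i\<in>UNIV. x $ i * hyp_form (B *v axis i 1) (B *v axis j 1)))"
    for B :: "'a ^ ('n \<times> 2) ^ ('n \<times> 2)"
    by (subst (1 2) basis_expansion[symmetric])
      (simp add: matrix_vector_mult_sum matrix_vector_mult_smult hyp_form_sum_left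
        hyp_form_sum_right hyp_form_smult_left hyp_form_smult_right)
  show "hyp_form (A *v x) (A *v y) = hyp_form x y"
    using expand[of A] expand[of "mat 1"] by (simp add: assms)
qed

section \<open>Eichler transformations\<close>

definition eichler ::
    "'a::comm_ring_1 ^ ('n::finite \<times> 2) \<Rightarrow> 'a ^ ('n \<times> 2) \<Rightarrow> 'a ^ ('n \<times> 2) \<Rightarrow> 'a ^ ('n \<times> 2)"
  where "eichler u x z =
    z - hyp_form z u *s x + hyp_form z x *s u - (hyp_quad x * hyp_form z u) *s u"

definition eichler_mat ::
    "'a::comm_ring_1 ^ ('n::finite \<times> 2) \<Rightarrow> 'a ^ ('n \<times> 2) \<Rightarrow> 'a ^ ('n \<times> 2) ^ ('n \<times> 2)"
  where "eichler_mat u x = matrix (eichler u x)"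

lemma eichler_mat_vector_mult [simp]: "eichler_mat u x *v z = eichler u x z"
  unfolding eichler_mat_def
  by (rule matrix_vector_mul_matrix)
    (simp_all add: eichler_def hyp_form_linear vec_eq_iff algebra_simps)

lemma eichler_component:
  "eichler u x z $ i =
    z $ i - hyp_form z u * x $ i + hyp_form z x * u $ i - hyp_quad x * hyp_form z u * u $ i"
  by (simp add: eichler_def)

lemma eichler_fixed:
  assumes "hyp_form s u = 0" "hyp_form s x = 0"
  shows "eichler u x s = s"
  using assms by (simp add: eichler_def)

lemma hyp_form_eichler_left:
  "hyp_form (eichler u x v) w =
    hyp_form v w - hyp_form v u * hyp_form x w + hyp_form v x * hyp_form u w
    - hyp_quad x * hyp_form v u * hyp_form u w"
  by (simp add: eichler_def hyp_form_linear)

lemma hyp_isometry_eichler_mat: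
  assumes "hyp_quad u = 0" "hyp_form u x = 0"
  shows "hyp_isometry (eichler_mat u x)"
  unfolding hyp_isometry_def eichler_mat_vector_mult
proof (intro allI)
  fix z y
  have "hyp_form u z = hyp_form z u" "hyp_form x z = hyp_form z x" "hyp_form u y = hyp_form y u"
    "hyp_form x y = hyp_form y x" "hyp_form x u = 0" "hyp_form u u = 0"
    "hyp_form x x = 2 * hyp_quad x"
    using assms hyp_form_self[of u] hyp_form_self[of x] by (simp_all add: hyp_form_commute)
  then show "hyp_form (eichler u x z) (eichler u x y) = hyp_form z y"
    unfolding eichler_def by (simp add: hyp_form_linear assms algebra_simps)
qed

lemma eichler_add:
  assumes "hyp_quad u = 0" "hyp_form u x = 0" "hyp_form u y = 0"
  shows "eichler u x (eichler u y z) = eichler u (x + y) z"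
proof -
  have orth: "hyp_form u u = 0" "hyp_form y u = 0" "hyp_form x u = 0" "hyp_form y x = hyp_form x y"
    using assms hyp_form_self[of u] by (simp_all add: hyp_form_commute)
  have "hyp_form (eichler u y z) u = hyp_form z u"
    "hyp_form (eichler u y z) x = hyp_form z x - hyp_form z u * hyp_form x y"
    unfolding eichler_def by (simp_all add: hyp_form_linear orth assms(2))
  then show ?thesis
    by (simp add: eichler_def[of u x "eichler u y z"])
      (simp add: eichler_def hyp_quad_add hyp_form_linear vec_eq_iff algebra_simps)
qed

lemma eichler_mat_mult:
  assumes "hyp_quad u = 0" "hyp_form u x = 0" "hyp_form u y = 0"
  shows "eichler_mat u x ** eichler_mat u y = eichler_mat u (x + y)"
  unfolding matrix_eq by (simp add: matrix_vector_mul_assoc[symmetric] eichler_add[OF assms])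

lemma eichler_mat_zero: "eichler_mat u 0 = mat 1"
  unfolding matrix_eq by (simp add: eichler_def)

section \<open>Integral Eichler transformations lie in \<open>SO\<^sup>+\<close>\<close>

definition real_vec :: "int ^ 'n \<Rightarrow> real ^ 'n" where
  "real_vec x = (\<chi> i. of_int (x $ i))"

lemma real_vec_component [simp]: "real_vec x $ i = of_int (x $ i)"
  by (simp add: real_vec_def)

lemma real_vec_axis: "real_vec (axis i 1) = axis i 1"
  by (simp add: vec_eq_iff axis_def)

lemma map_matrix_vector_mult_real_vec: "map_matrix of_int A *v real_vec z = real_vec (A *v z)"
  by (simp add: vec_eq_iff matrix_vector_mult_def)

lemma map_matrix_of_int_mult:
  "(map_matrix of_int (A ** B) :: real ^ _ ^ _) = map_matrix of_int A ** map_matrix of_int B"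
  by (simp add: vec_eq_iff matrix_matrix_mult_def)

lemma det_map_matrix_of_int: "(det (map_matrix of_int A) :: real) = of_int (det A)"
  by (simp add: det_def of_int_sum of_int_prod)

lemma hyp_form_real_vec: "hyp_form (real_vec x) (real_vec y) = of_int (hyp_form x y)"
  by (simp add: hyp_form_def)

lemma hyp_quad_real_vec: "hyp_quad (real_vec x) = of_int (hyp_quad x)"
  by (simp add: hyp_quad_def)

lemma map_matrix_eichler_mat:
  "map_matrix of_int (eichler_mat u x) = eichler_mat (real_vec u) (real_vec x)"
proof -
  have "real_vec (eichler u x z) = eichler (real_vec u) (real_vec x) (real_vec z)" for z
    by (simp add: eichler_def vec_eq_iff hyp_form_real_vec hyp_quad_real_vec)
  from this[of "axis j 1" for j] show ?thesis
    by (simp add: eichler_mat_def matrix_def vec_eq_iff real_vec_axis)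
qed

lemma hyp_isometry_map_matrix_of_int:
  fixes A :: "int ^ ('n::finite \<times> 2) ^ ('n \<times> 2)"
  assumes "hyp_isometry A"
  shows "hyp_isometry (map_matrix of_int A :: real ^ _ ^ _)"
proof (rule hyp_isometry_if_basis)
  fix i j
  show "hyp_form (map_matrix of_int A *v axis i 1) (map_matrix of_int A *v axis j 1) =
      (hyp_form (axis i 1) (axis j 1) :: real)"
    using assms hyp_form_real_vec[of "axis i 1" "axis j 1"]
    by (simp add: hyp_isometry_def map_matrix_vector_mult_real_vec hyp_form_real_vec
        flip: real_vec_axis)
qed

text \<open>Over the reals, \<open>orient_preserving\<close> is the sign of the determinant of this matrix, which
  is never zero on isometries: \<open>W = span (wpos k)\<close> is positive definite and \<open>W\<^sup>\<bottom>\<close> negative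
  semidefinite.\<close>

definition orient_matrix :: "real ^ (3 \<times> 2) ^ (3 \<times> 2) \<Rightarrow> real ^ 3 ^ 3" where
  "orient_matrix Y = (\<chi> k l. hyp_form (real_vec (wpos k)) (Y *v real_vec (wpos l)))"

lemma orient_preserving_iff_det_orient_matrix:
  "orient_preserving A \<longleftrightarrow> det (orient_matrix (map_matrix of_int A)) > 0"
proof -
  have "orient_matrix (map_matrix of_int A) =
      map_matrix of_int ((\<chi> k l. bil (wpos k) (A *v wpos l)) :: int ^ 3 ^ 3)"
    by (simp add: orient_matrix_def vec_eq_iff map_matrix_vector_mult_real_vec hyp_form_real_vec
        bil_eq_hyp_form)
  then show ?thesis by (simp add: orient_preserving_def det_map_matrix_of_int)
qed

lemma wpos_component: "wpos k $ (l, c) = (if l = k then 1 else 0)"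
  using two_cases[of c] by (auto simp: wpos_def e_def f_def axis_def)

lemma real_vec_wpos: "real_vec (wpos k) = axis (k, 0) 1 + axis (k, 1) 1"
  by (simp add: wpos_def e_def f_def vec_eq_iff axis_def)

lemma det_orient_matrix_nonzero:
  assumes "hyp_isometry Y"
  shows "det (orient_matrix Y) \<noteq> 0"
proof -
  have "c = 0" if kernel: "orient_matrix Y *v c = 0" for c
  proof -
    define z where "z = (\<Sum>l\<in>UNIV. c $ l *s real_vec (wpos l))"
    define y where "y = Y *v z"
    have z_component: "z $ (k, i) = c $ k" for k i
      by (simp add: z_def sum_component wpos_component if_distrib sum.delta cong: if_cong)
    have "hyp_form (real_vec (wpos k)) y = 0" for k
    proof -
      have "hyp_form (real_vec (wpos k)) y =
          (\<Sum>l\<in>UNIV. c $ l * hyp_form (real_vec (wpos k)) (Y *v real_vec (wpos l)))"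
        by (simp only: y_def z_def matrix_vector_mult_sum matrix_vector_mult_smult
            hyp_form_sum_right hyp_form_smult_right)
      also have "\<dots> = (orient_matrix Y *v c) $ k"
        by (simp add: orient_matrix_def matrix_vector_mult_def mult.commute)
      finally show ?thesis using kernel by simp
    qed
    then have "y $ (k, 0) = - y $ (k, 1)" for k
      by (simp add: real_vec_wpos hyp_form_add_left hyp_form_axis_left eq_neg_iff_add_eq_0
          add.commute)
    then have "hyp_form y y = (\<Sum>k\<in>UNIV. - 2 * (y $ (k, 1))\<^sup>2)"
      unfolding hyp_form_def by (simp add: power2_eq_square)
    also have "\<dots> \<le> 0" by (intro sum_nonpos) simp
    also have "hyp_form y y = hyp_form z z"
      using assms by (simp add: y_def hyp_isometry_def)
    also have "hyp_form z z = (\<Sum>k\<in>UNIV. 2 * (c $ k)\<^sup>2)"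
      unfolding hyp_form_def by (simp add: z_component power2_eq_square)
    finally have "(\<Sum>k\<in>UNIV. 2 * (c $ k)\<^sup>2) = 0"
      by (simp add: antisym sum_nonneg)
    then show "c = 0"
      by (simp add: sum_nonneg_eq_0_iff vec_eq_iff)
  qed
  then have "invertible (orient_matrix Y)"
    using matrix_left_invertible_ker invertible_left_inverse by blast
  then show ?thesis using invertible_det_nz by blast
qed

lemma continuous_on_det:
  fixes M :: "real \<Rightarrow> real ^ 'n ^ 'n"
  assumes "\<And>i j. continuous_on S (\<lambda>t. M t $ i $ j)"
  shows "continuous_on S (\<lambda>t. det (M t))"
  unfolding det_def by (intro continuous_intros assms)

text \<open>Over the reals, \<open>t \<mapsto> E(u, t x) B\<close> is a path of isometries from \<open>B\<close> to \<open>E(u, x) B\<close>,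
  along which the sign of \<open>det \<circ> orient_matrix\<close> cannot change.\<close>

lemma orient_preserving_eichler_mat_mult:
  fixes B :: U3mat
  assumes iso: "hyp_isometry B" and orient: "orient_preserving B"
    and u: "hyp_quad u = 0" "hyp_form u x = 0"
  shows "orient_preserving (eichler_mat u x ** B)"
proof -
  define U X where "U = real_vec u" and "X = real_vec x"
  define BR where "BR = (map_matrix of_int B :: real ^ _ ^ _)"
  define g where "g t = det (orient_matrix (eichler_mat U (t *s X) ** BR))" for t
  have isoBR: "hyp_isometry BR"
    unfolding BR_def using iso by (rule hyp_isometry_map_matrix_of_int)
  have U: "hyp_quad U = 0" "hyp_form U (t *s X) = 0" for t
    using u by (simp_all add: U_def X_def hyp_quad_real_vec hyp_form_real_vec hyp_form_smult_right)
  have nonzero: "g t \<noteq> 0" for t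
    unfolding g_def
    by (intro det_orient_matrix_nonzero hyp_isometry_mult hyp_isometry_eichler_mat U isoBR)
  have "g 0 > 0"
    using orient
    by (simp add: g_def eichler_mat_zero orient_preserving_iff_det_orient_matrix BR_def)
  moreover have "continuous_on {0..1} g"
    unfolding g_def orient_matrix_def
    by (intro continuous_on_det)
      (simp add: matrix_vector_mul_assoc[symmetric] eichler_def hyp_form_linear hyp_quad_smult;
        intro continuous_intros)
  ultimately have "g 1 > 0"
    using IVT2'[of g 1 0 0] nonzero by force
  moreover have "g 1 = det (orient_matrix (map_matrix of_int (eichler_mat u x ** B)))"
    by (simp add: g_def map_matrix_of_int_mult map_matrix_eichler_mat U_def X_def BR_def)
  ultimately show ?thesis
    by (simp add: orient_preserving_iff_det_orient_matrix)
qed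

text \<open>\<open>det E(u, x) = \<plusminus>1\<close> since \<open>E(u, -x)\<close> inverts it, and over the reals it is the square
  \<open>E(u, x/2)\<^sup>2\<close>.\<close>

lemma det_eichler_mat:
  fixes u x :: "int ^ ('n::finite \<times> 2)"
  assumes u: "hyp_quad u = 0" "hyp_form u x = 0"
  shows "det (eichler_mat u x) = 1"
proof -
  have "det (eichler_mat u x) * det (eichler_mat u (- x)) = 1"
    using u by (simp add: det_mul[symmetric] eichler_mat_mult hyp_form_minus_right eichler_mat_zero)
  then have unit: "det (eichler_mat u x) = 1 \<or> det (eichler_mat u x) = -1"
    by (rule pos_zmult_eq_1_iff_lemma)
  define U X where "U = real_vec u" and "X = real_vec x"
  have U: "hyp_quad U = 0" "hyp_form U ((1/2) *s X) = 0"
    using u by (simp_all add: U_def X_def hyp_quad_real_vec hyp_form_real_vec hyp_form_smult_right)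
  have half: "(1/2) *s X + (1/2) *s X = X"
    by (simp add: vec_eq_iff)
  have "real_of_int (det (eichler_mat u x)) = det (eichler_mat U X)"
    by (simp add: det_map_matrix_of_int[symmetric] map_matrix_eichler_mat U_def X_def)
  also have "\<dots> = (det (eichler_mat U ((1/2) *s X)))\<^sup>2"
    using eichler_mat_mult[OF U(1) U(2) U(2)] half
    by (simp add: det_mul[symmetric] power2_eq_square)
  finally have "real_of_int (det (eichler_mat u x)) \<ge> 0" by simp
  then show ?thesis using unit by auto
qed

lemma mem_SOplus_U3_iff: "A \<in> SOplus_U3 \<longleftrightarrow> hyp_isometry A \<and> det A = 1 \<and> orient_preserving A"
  by (auto simp: SOplus_U3_def SO_U3_def hyp_isometry_def bil_eq_hyp_form)

lemma hyp_isometry_if_SOplus: "A \<in> SOplus_U3 \<Longrightarrow> hyp_isometry A"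
  by (simp add: mem_SOplus_U3_iff)

lemma eichler_mat_mult_mem_SOplus:
  fixes u x :: U3
  assumes u: "hyp_quad u = 0" "hyp_form u x = 0" and B: "B \<in> SOplus_U3"
  shows "eichler_mat u x ** B \<in> SOplus_U3"
  using B orient_preserving_eichler_mat_mult[OF _ _ u]
    hyp_isometry_mult[OF hyp_isometry_eichler_mat[OF u]]
  by (simp add: mem_SOplus_U3_iff det_mul det_eichler_mat[OF u])

lemma hyp_form_wpos: "hyp_form (wpos k) (wpos l) = (if k = l then 2 else 0)"
  unfolding wpos_def[of k] e_def f_def
  by (simp add: hyp_form_add_left hyp_form_axis_left wpos_component)

lemma mat_1_mem_SOplus: "mat 1 \<in> SOplus_U3"
proof -
  have "det ((\<chi> k l. bil (wpos k) (mat 1 *v wpos l)) :: int ^ 3 ^ 3) = (\<Prod>k\<in>(UNIV :: 3 set). 2)"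
    by (subst det_diagonal) (simp_all add: bil_eq_hyp_form hyp_form_wpos)
  then show ?thesis
    by (simp add: mem_SOplus_U3_iff hyp_isometry_def orient_preserving_def)
qed

lemma e_component: "e k $ i = (if i = (k, 0) then 1 else 0)"
  by (simp add: e_def axis_def)

lemma f_component: "f k $ i = (if i = (k, 1) then 1 else 0)"
  by (simp add: f_def axis_def)

lemma hyp_form_e_f [simp]:
  "hyp_form z (e k) = z $ (k, 1)" "hyp_form z (f k) = z $ (k, 0)"
  "hyp_form (e k) z = z $ (k, 1)" "hyp_form (f k) z = z $ (k, 0)"
  "hyp_quad (e k) = 0" "hyp_quad (f k) = 0"
  by (simp_all add: e_def f_def hyp_form_axis_left hyp_form_axis_right hyp_quad_axis)

definition elementary_eichler :: "U3 \<Rightarrow> U3 \<Rightarrow> bool" where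
  "elementary_eichler u x \<longleftrightarrow> (\<exists>k. k \<noteq> 0 \<and> (u = e k \<or> u = f k) \<and> x $ (k, 0) = 0 \<and> x $ (k, 1) = 0)"

lemma elementary_eichler_isotropic:
  assumes "elementary_eichler u x"
  shows "hyp_quad u = 0" "hyp_form u x = 0"
  using assms by (auto simp: elementary_eichler_def)

inductive_set eichler_products :: "U3mat set" where
  mat_1: "mat 1 \<in> eichler_products"
| mult: "elementary_eichler u x \<Longrightarrow> P \<in> eichler_products \<Longrightarrow> eichler_mat u x ** P \<in> eichler_products"

lemma eichler_mat_mem_eichler_products:
  "elementary_eichler u x \<Longrightarrow> eichler_mat u x \<in> eichler_products"
  using eichler_products.mult[OF _ eichler_products.mat_1] by simp

lemma eichler_products_mult:
  "P \<in> eichler_products \<Longrightarrow> Q \<in> eichler_products \<Longrightarrow> P ** Q \<in> eichler_products"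
  by (induction P rule: eichler_products.induct)
    (auto simp: matrix_mul_assoc[symmetric] intro: eichler_products.mult)

lemma eichler_products_inverse:
  assumes "P \<in> eichler_products"
  shows "\<exists>Q \<in> eichler_products. Q ** P = mat 1 \<and> P ** Q = mat 1"
  using assms
proof (induction P rule: eichler_products.induct)
  case mat_1
  then show ?case using eichler_products.mat_1 by auto
next
  case (mult u x P)
  then obtain Q where Q: "Q \<in> eichler_products" "Q ** P = mat 1" "P ** Q = mat 1" by blast
  have neg: "elementary_eichler u (- x)"
    using mult(1) by (auto simp: elementary_eichler_def)
  have "eichler_mat u (- x) ** eichler_mat u x = mat 1"
    "eichler_mat u x ** eichler_mat u (- x) = mat 1"
    using elementary_eichler_isotropic[OF mult(1)] elementary_eichler_isotropic[OF neg]
    by (simp_all add: eichler_mat_mult eichler_mat_zero)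
  with Q have "(Q ** eichler_mat u (- x)) ** (eichler_mat u x ** P) = mat 1"
    "(eichler_mat u x ** P) ** (Q ** eichler_mat u (- x)) = mat 1"
    by (simp_all add: matrix_mul_assoc) (simp_all flip: matrix_mul_assoc)
  moreover have "Q ** eichler_mat u (- x) \<in> eichler_products"
    by (rule eichler_products_mult[OF Q(1) eichler_mat_mem_eichler_products[OF neg]])
  ultimately show ?case by blast
qed

lemma eichler_products_mult_mem_SOplus:
  "P \<in> eichler_products \<Longrightarrow> B \<in> SOplus_U3 \<Longrightarrow> P ** B \<in> SOplus_U3"
  by (induction P rule: eichler_products.induct)
    (auto simp: matrix_mul_assoc[symmetric]
      intro: eichler_mat_mult_mem_SOplus elementary_eichler_isotropic)

lemma eichler_products_subset_SOplus: "eichler_products \<subseteq> SOplus_U3"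
  using eichler_products_mult_mem_SOplus[OF _ mat_1_mem_SOplus] by auto

section \<open>Moving primitive isotropic vectors to \<open>e p\<close>\<close>

definition supported_on :: "3 set \<Rightarrow> U3 \<Rightarrow> bool" where
  "supported_on T z \<longleftrightarrow> (\<forall>k c. k \<notin> T \<longrightarrow> z $ (k, c) = 0)"

definition fixes_planes_outside :: "3 set \<Rightarrow> U3mat \<Rightarrow> bool" where
  "fixes_planes_outside T A \<longleftrightarrow> (\<forall>k. k \<notin> T \<longrightarrow> A *v e k = e k \<and> A *v f k = f k)"

definition eichler_products_on :: "3 set \<Rightarrow> U3mat set" where
  "eichler_products_on T = {P \<in> eichler_products. fixes_planes_outside T P}"

definition primitive_isotropic :: "U3 \<Rightarrow> bool" where
  "primitive_isotropic v \<longleftrightarrow> hyp_form v v = 0 \<and> (\<exists>w. hyp_form v w = 1)"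

lemma supported_on_mono: "S \<subseteq> T \<Longrightarrow> supported_on S z \<Longrightarrow> supported_on T z"
  by (auto simp: supported_on_def)

lemma supported_on_e_f:
  "supported_on T (c *s e k) \<longleftrightarrow> c = 0 \<or> k \<in> T" "supported_on T (c *s f k) \<longleftrightarrow> c = 0 \<or> k \<in> T"
  "supported_on T (e k) \<longleftrightarrow> k \<in> T" "supported_on T (f k) \<longleftrightarrow> k \<in> T"
  by (auto simp: supported_on_def e_component f_component)

lemma supported_on_uminus [simp]: "supported_on T (- z) \<longleftrightarrow> supported_on T z"
  by (simp add: supported_on_def)

lemma primitive_isotropic_e: "primitive_isotropic (e k)"
  unfolding primitive_isotropic_def by (auto simp: e_component f_component intro!: exI[of _ "f k"])

lemma primitive_isotropic_f: "primitive_isotropic (f k)"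
  unfolding primitive_isotropic_def by (auto simp: e_component f_component intro!: exI[of _ "e k"])

lemma fixes_planes_outside_mult:
  "fixes_planes_outside T A \<Longrightarrow> fixes_planes_outside T B \<Longrightarrow> fixes_planes_outside T (A ** B)"
  by (simp add: fixes_planes_outside_def matrix_vector_mul_assoc[symmetric])

lemma eichler_products_on_mult:
  "P \<in> eichler_products_on T \<Longrightarrow> Q \<in> eichler_products_on T \<Longrightarrow> P ** Q \<in> eichler_products_on T"
  by (simp add: eichler_products_on_def eichler_products_mult fixes_planes_outside_mult)

lemma hyp_isometry_if_eichler_products: "P \<in> eichler_products \<Longrightarrow> hyp_isometry P"
  using eichler_products_subset_SOplus hyp_isometry_if_SOplus by blast

lemma eichler_products_on_isometry:
  assumes "P \<in> eichler_products_on T"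
  shows "hyp_isometry P" "fixes_planes_outside T P"
  using assms hyp_isometry_if_eichler_products by (auto simp: eichler_products_on_def)

lemma supported_on_image:
  assumes iso: "hyp_isometry A" and fixed: "fixes_planes_outside T A" and z: "supported_on T z"
  shows "supported_on T (A *v z)"
proof -
  have coords: "(A *v z) $ (k, 1) = z $ (k, 1) \<and> (A *v z) $ (k, 0) = z $ (k, 0)" if "k \<notin> T" for k
  proof -
    have "A *v e k = e k" "A *v f k = f k"
      using fixed that by (simp_all add: fixes_planes_outside_def)
    moreover have "hyp_form (A *v z) (A *v e k) = hyp_form z (e k)"
      "hyp_form (A *v z) (A *v f k) = hyp_form z (f k)"
      using iso by (simp_all add: hyp_isometry_def)
    ultimately show ?thesis by simp
  qed
  show ?thesis
    unfolding supported_on_def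
  proof (intro allI impI)
    fix k c
    assume "k \<notin> T"
    then show "(A *v z) $ (k, c) = 0"
      using coords[of k] z two_cases[of c] unfolding supported_on_def by auto
  qed
qed

lemma primitive_isotropic_image:
  assumes "hyp_isometry A" "primitive_isotropic v"
  shows "primitive_isotropic (A *v v)"
proof -
  obtain w where "hyp_form v v = 0" "hyp_form v w = 1"
    using assms(2) primitive_isotropic_def by blast
  then have "hyp_form (A *v v) (A *v v) = 0" "hyp_form (A *v v) (A *v w) = 1"
    using assms(1) by (simp_all add: hyp_isometry_def)
  then show ?thesis
    unfolding primitive_isotropic_def by blast
qed

lemma vector_in_plane:
  assumes "supported_on {p} v"
  shows "v = v $ (p, 0) *s e p + v $ (p, 1) *s f p"
  unfolding vec_eq_iff
proof
  fix i :: "3 \<times> 2"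
  obtain k c where "i = (k, c)" by (cases i)
  then show "v $ i = (v $ (p, 0) *s e p + v $ (p, 1) *s f p) $ i"
    using assms two_cases[of c]
    by (cases "k = p") (auto simp: supported_on_def e_component f_component)
qed

lemma primitive_isotropic_in_plane:
  assumes "supported_on {p} v" "primitive_isotropic v"
  shows "v = e p \<or> v = - e p \<or> v = f p \<or> v = - f p"
proof -
  define a b where "a = v $ (p, 0)" and "b = v $ (p, 1)"
  have v: "v = a *s e p + b *s f p"
    unfolding a_def b_def by (rule vector_in_plane[OF assms(1)])
  obtain w where "hyp_form v w = 1" "hyp_form v v = 0"
    using assms(2) primitive_isotropic_def by blast
  then have w: "a * w $ (p, 1) + b * w $ (p, 0) = 1" and "a * b = 0"
    by (simp_all add: v hyp_form_linear e_component f_component)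
  then consider "b = 0" | "a = 0" by auto
  then have "(a = 1 \<or> a = -1) \<and> b = 0 \<or> a = 0 \<and> (b = 1 \<or> b = -1)"
  proof cases
    case 1
    then have "a * w $ (p, 1) = 1" using w by simp
    then show ?thesis using 1 pos_zmult_eq_1_iff_lemma by blast
  next
    case 2
    then have "b * w $ (p, 0) = 1" using w by simp
    then show ?thesis using 2 pos_zmult_eq_1_iff_lemma by blast
  qed
  then show ?thesis
    by (auto simp: v vector_smult_lneg)
qed

lemma eichler_shear:
  assumes "hyp_quad u = 0" "hyp_quad y = 0" "hyp_form u y = 0"
    and "hyp_form u u' = 1" "hyp_form y u' = 0"
  shows "hyp_form (eichler u (k *s y) v) u = hyp_form v u"
    and "hyp_form (eichler u (k *s y) v) u' = hyp_form v u' + k * hyp_form v y"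
    and "hyp_form (eichler u (k *s y) v) y = hyp_form v y"
proof -
  have "hyp_form u u = 0" "hyp_form y u = 0" "hyp_form y y = 0"
    using assms hyp_form_self[of u] hyp_form_self[of y] hyp_form_commute[of y u] by simp_all
  then show "hyp_form (eichler u (k *s y) v) u = hyp_form v u"
    and "hyp_form (eichler u (k *s y) v) u' = hyp_form v u' + k * hyp_form v y"
    and "hyp_form (eichler u (k *s y) v) y = hyp_form v y"
    using assms by (simp_all add: hyp_form_eichler_left hyp_form_linear hyp_quad_smult)
qed

lemma eichler_straighten:
  fixes y :: U3
  assumes "hyp_form y y = 0" "y $ (p, 1) = 1"
  shows "eichler (e p) (\<chi> i. if fst i = p then 0 else y $ i) y = f p"
proof -
  define m where "m = (\<chi> i. if fst i = p then 0 else y $ i)"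
  have y: "y = m + y $ (p, 0) *s e p + f p"
    using assms(2) two_cases by (auto simp: vec_eq_iff m_def e_component f_component)
  have m_p: "m $ (p, 0) = 0" "m $ (p, 1) = 0"
    by (simp_all add: m_def)
  have "hyp_form y y = 2 * hyp_quad m + 2 * y $ (p, 0)"
    by (subst (1 2) y) (simp add: hyp_form_linear m_p hyp_form_self[of m] e_component f_component)
  then have q: "hyp_quad m = - y $ (p, 0)"
    using assms(1) by simp
  have "hyp_form y m = 2 * hyp_quad m"
    by (subst y) (simp add: hyp_form_linear m_p hyp_form_self[of m])
  have "eichler (e p) m y $ i = f p $ i" for i
  proof -
    have "eichler (e p) m y $ i = y $ i - m $ i - y $ (p, 0) * e p $ i"
      using \<open>hyp_form y m = 2 * hyp_quad m\<close>
      by (simp add: eichler_component q assms(2) algebra_simps)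
    also have "\<dots> = f p $ i"
      using assms(2) two_cases by (cases i) (auto simp: m_def e_component f_component)
    finally show ?thesis .
  qed
  then show ?thesis
    unfolding m_def vec_eq_iff by blast
qed

text \<open>A Euclidean algorithm on the coordinates of \<open>v\<close> in the planes \<open>T\<close>; the plane \<open>0 \<in> T\<close>,
  where no elementary Eichler transformation is centred, serves as auxiliary plane.\<close>

locale isotropic_descent =
  fixes T :: "3 set" and p :: 3
  assumes p_nonzero: "p \<noteq> 0" and p_mem: "p \<in> T" and zero_mem: "0 \<in> T"
begin

definition movable :: "U3 \<Rightarrow> bool" where
  "movable v \<longleftrightarrow> (\<exists>P \<in> eichler_products_on T. P *v v = e p)"

lemma movable_if_movable_image:
  assumes "P \<in> eichler_products_on T" "movable (P *v v)"
  shows "movable v"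
  using assms eichler_products_on_mult unfolding movable_def by (metis matrix_vector_mul_assoc)

lemma eichler_mat_mem_eichler_products_on:
  assumes u: "u = e p \<or> u = f p" and x: "supported_on (T - {p}) x"
  shows "eichler_mat u x \<in> eichler_products_on T"
proof -
  have "elementary_eichler u x"
    using u x p_nonzero unfolding elementary_eichler_def supported_on_def by auto
  moreover have "eichler u x (e k) = e k \<and> eichler u x (f k) = f k" if "k \<notin> T" for k
  proof -
    have "k \<noteq> p" using that p_mem by auto
    then show ?thesis
      using u x that unfolding supported_on_def
      by (intro conjI eichler_fixed) (auto simp: e_component f_component)
  qed
  ultimately show ?thesis
    by (simp add: eichler_products_on_def fixes_planes_outside_def eichler_mat_mem_eichler_products)
qed

lemma eichler_mat_plane_0_mem:
  assumes "u = e p \<or> u = f p" "supported_on {0} x"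
  shows "eichler_mat u x \<in> eichler_products_on T"
  using assms zero_mem p_nonzero
  by (intro eichler_mat_mem_eichler_products_on) (auto elim: supported_on_mono[rotated])

lemma movable_uminus_e: "movable (- e p)"
proof -
  let ?S = "eichler_mat (f p) (e 0) ** eichler_mat (e p) (2 *s f 0) ** eichler_mat (f p) (e 0)"
  have "eichler (f p) (e 0) (- e p) = e 0 - e p"
    "eichler (e p) (2 *s f 0) (e 0 - e p) = e 0 + e p"
    "eichler (f p) (e 0) (e 0 + e p) = e p"
    using p_nonzero
    by (auto simp: vec_eq_iff eichler_component hyp_form_linear hyp_quad_smult
        e_component f_component)
  then have "?S *v (- e p) = e p"
    by (simp only: matrix_vector_mul_assoc[symmetric] eichler_mat_vector_mult)
  moreover have "?S \<in> eichler_products_on T"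
    by (intro eichler_products_on_mult eichler_mat_plane_0_mem) (simp_all add: supported_on_e_f)
  ultimately show ?thesis
    unfolding movable_def by blast
qed

lemma movable_f: "movable (f p)" and movable_uminus_f: "movable (- f p)"
proof -
  let ?S = "eichler_mat (f p) (f 0) ** eichler_mat (f p) (- e 0)
    ** eichler_mat (e p) (- f 0) ** eichler_mat (e p) (e 0)"
  have "eichler (e p) (e 0) (f p) = f p - e 0"
    "eichler (e p) (- f 0) (f p - e 0) = f p - e 0 + f 0 + e p"
    "eichler (f p) (- e 0) (f p - e 0 + f 0 + e p) = f 0 + e p"
    "eichler (f p) (f 0) (f 0 + e p) = e p"
    using p_nonzero
    by (auto simp: vec_eq_iff eichler_component hyp_form_linear hyp_quad_smult
        e_component f_component)
  then have S: "?S *v f p = e p"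
    by (simp only: matrix_vector_mul_assoc[symmetric] eichler_mat_vector_mult)
  moreover have S_mem: "?S \<in> eichler_products_on T"
    by (intro eichler_products_on_mult eichler_mat_plane_0_mem) (simp_all add: supported_on_e_f)
  ultimately show "movable (f p)"
    unfolding movable_def by blast
  show "movable (- f p)"
    using movable_if_movable_image[OF S_mem] movable_uminus_e
    by (simp add: matrix_vector_mult_uminus S)
qed

lemma movable_if_in_plane:
  assumes "supported_on {p} v" "primitive_isotropic v"
  shows "movable v"
proof -
  have "movable (e p)"
    unfolding movable_def eichler_products_on_def fixes_planes_outside_def
    using eichler_products.mat_1 by fastforce
  then show ?thesis
    using primitive_isotropic_in_plane[OF assms] movable_uminus_e movable_f movable_uminus_f
    by blast
qed

definition movable_below :: "int \<Rightarrow> bool" where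
  "movable_below m \<longleftrightarrow>
    (\<forall>v i. supported_on T v \<and> primitive_isotropic v \<and> v $ i \<noteq> 0 \<and> \<bar>v $ i\<bar> < m \<longrightarrow> movable v)"

lemma movable_by_reduction_mod:
  assumes IH: "movable_below m"
    and v: "supported_on T v" "primitive_isotropic v"
    and u: "u = e p \<or> u = f p" and a: "hyp_form v u \<noteq> 0" "\<bar>hyp_form v u\<bar> \<le> m"
  shows "movable v"
proof -
  define a where "a = hyp_form v u"
  define x where "x = (\<chi> i. if fst i = p then 0 else v $ i div a)"
  define P where "P = eichler_mat u x"
  have P: "P \<in> eichler_products_on T"
    unfolding P_def using v(1)
    by (intro eichler_mat_mem_eichler_products_on[OF u]) (auto simp: supported_on_def x_def)
  have v': "supported_on T (P *v v)" "primitive_isotropic (P *v v)"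
    using supported_on_image primitive_isotropic_image eichler_products_on_isometry[OF P] v
    by blast+
  have reduced: "(P *v v) $ (k, c) = v $ (k, c) mod a" if "k \<noteq> p" for k c
    using u that
    by (auto simp: P_def eichler_component x_def e_component f_component a_def
        minus_mult_div_eq_mod)
  show ?thesis
  proof (cases "\<exists>k c. k \<noteq> p \<and> (P *v v) $ (k, c) \<noteq> 0")
    case True
    then obtain k c where "k \<noteq> p" "(P *v v) $ (k, c) \<noteq> 0" by blast
    moreover have "\<bar>(P *v v) $ (k, c)\<bar> < \<bar>a\<bar>"
      using reduced[OF \<open>k \<noteq> p\<close>] abs_mod_less a(1) by (simp add: a_def)
    then have "\<bar>(P *v v) $ (k, c)\<bar> < m"
      using a(2) by (simp add: a_def)
    ultimately have "movable (P *v v)" using IH v' unfolding movable_below_def by blast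
    then show ?thesis using movable_if_movable_image[OF P] by blast
  next
    case False
    then have "supported_on {p} (P *v v)" by (auto simp: supported_on_def)
    then show ?thesis using movable_if_movable_image[OF P] movable_if_in_plane v'(2) by blast
  qed
qed

text \<open>A nonzero coordinate outside the plane \<open>p\<close> is first transported into the coordinate
  \<open>v \<cdot> f p\<close>, without increasing its size.\<close>

lemma movable_by_shear:
  assumes IH: "movable_below m"
    and v: "supported_on T v" "primitive_isotropic v"
    and j: "j \<in> T" "j \<noteq> p"
    and s: "hyp_form v (axis (j, c) 1) \<noteq> 0" "\<bar>hyp_form v (axis (j, c) 1)\<bar> \<le> m"
  shows "movable v"
proof -
  define y where "y = (axis (j, c) 1 :: U3)"
  obtain k where k: "v $ (p, 0) + k * hyp_form v y \<noteq> 0"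
    "\<bar>v $ (p, 0) + k * hyp_form v y\<bar> \<le> \<bar>hyp_form v y\<bar>"
    using exists_shift_nonzero_abs_le s unfolding y_def by blast
  define P where "P = eichler_mat (e p) (k *s y)"
  have P: "P \<in> eichler_products_on T"
    unfolding P_def using j
    by (intro eichler_mat_mem_eichler_products_on) (auto simp: supported_on_def y_def axis_def)
  have v': "supported_on T (P *v v)" "primitive_isotropic (P *v v)"
    using supported_on_image primitive_isotropic_image eichler_products_on_isometry[OF P] v
    by blast+
  have "y $ (p, c') = 0" for c'
    using j by (simp add: y_def axis_def)
  then have "hyp_form (P *v v) (f p) = hyp_form v (f p) + k * hyp_form v y"
    unfolding P_def eichler_mat_vector_mult
    by (intro eichler_shear(2)) (simp_all add: y_def hyp_quad_axis e_component)
  then have "movable (P *v v)"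
    using movable_by_reduction_mod[OF IH v'] k s(2) unfolding y_def by fastforce
  then show ?thesis using movable_if_movable_image[OF P] by blast
qed

lemma movable_if_primitive_isotropic:
  assumes "supported_on T v" "primitive_isotropic v"
  shows "movable v"
proof -
  obtain w where "hyp_form v w = 1"
    using assms(2) primitive_isotropic_def by blast
  then obtain i where "v $ i \<noteq> 0"
    by (metis hyp_form_zero(1) vec_eq_iff zero_index zero_neq_one)
  then show ?thesis
    using assms
  proof (induction "nat \<bar>v $ i\<bar>" arbitrary: v i rule: less_induct)
    case less
    obtain k c where i: "i = (k, c)" by (cases i)
    have IH: "movable_below \<bar>v $ i\<bar>"
      unfolding movable_below_def
    proof (intro allI impI)
      fix v' i'
      assume "supported_on T v' \<and> primitive_isotropic v' \<and> v' $ i' \<noteq> 0 \<and> \<bar>v' $ i'\<bar> < \<bar>v $ i\<bar>"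
      then show "movable v'" using less.hyps[of v' i'] less.prems(1) by simp
    qed
    have "k \<in> T"
      using less.prems i unfolding supported_on_def by blast
    show ?case
    proof (cases "k = p")
      case True
      have "v $ i = hyp_form v (f p) \<or> v $ i = hyp_form v (e p)"
        using two_cases[of c] i True by auto
      then show ?thesis
        using movable_by_reduction_mod[OF IH less.prems(2,3)] less.prems(1) by fastforce
    next
      case False
      have "hyp_form v (axis (k, 1 - c) 1) = v $ i"
        by (simp add: hyp_form_axis_right i)
      then show ?thesis
        using movable_by_shear[OF IH less.prems(2,3) \<open>k \<in> T\<close> False, of "1 - c"] less.prems(1)
        by simp
    qed
  qed
qed

lemma exists_eichler_product_fixing_plane:
  assumes iso: "hyp_isometry A" and fixed: "fixes_planes_outside T A"
  obtains P where "P \<in> eichler_products_on T" "fixes_planes_outside (T - {p}) (P ** A)"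
proof -
  have "supported_on T (A *v e p)" "primitive_isotropic (A *v e p)"
    using supported_on_image[OF iso fixed] primitive_isotropic_image[OF iso] p_mem
    by (simp_all add: supported_on_e_f primitive_isotropic_e)
  then obtain P1 where P1: "P1 \<in> eichler_products_on T" "P1 *v (A *v e p) = e p"
    using movable_if_primitive_isotropic movable_def by blast
  define A1 where "A1 = P1 ** A"
  have A1: "hyp_isometry A1" "fixes_planes_outside T A1" "A1 *v e p = e p"
    using eichler_products_on_isometry[OF P1(1)] iso fixed P1(2)
    by (simp_all add: A1_def hyp_isometry_mult fixes_planes_outside_mult
        matrix_vector_mul_assoc[symmetric])
  define y where "y = A1 *v f p"
  have "y $ (p, 1) = hyp_form (A1 *v f p) (A1 *v e p)"
    using A1(3) by (simp add: y_def)
  then have "y $ (p, 1) = 1"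
    using A1(1) by (simp add: hyp_isometry_def f_component)
  moreover have "hyp_form y y = 0" "supported_on T y"
    using A1 supported_on_image[OF A1(1,2)] p_mem
    by (auto simp: y_def hyp_isometry_def supported_on_e_f f_component)
  ultimately have y: "hyp_form y y = 0" "y $ (p, 1) = 1" "supported_on T y"
    by simp_all
  define m where "m = (\<chi> i. if fst i = p then 0 else y $ i)"
  define E where "E = eichler_mat (e p) m"
  have E: "E \<in> eichler_products_on T"
    unfolding E_def using y(3)
    by (intro eichler_mat_mem_eichler_products_on) (auto simp: supported_on_def m_def)
  have "E *v (A1 *v f p) = f p" "E *v (A1 *v e p) = e p"
    using eichler_straighten[OF y(1,2)] A1(3)
    by (simp_all add: E_def y_def[symmetric] m_def eichler_fixed e_component)
  moreover have "(E ** P1) ** A = E ** A1"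
    by (simp add: A1_def matrix_mul_assoc)
  ultimately have "fixes_planes_outside (T - {p}) ((E ** P1) ** A)"
    using fixes_planes_outside_mult[OF eichler_products_on_isometry(2)[OF E] A1(2)]
    by (auto simp: fixes_planes_outside_def matrix_vector_mul_assoc[symmetric])
  moreover have "E ** P1 \<in> eichler_products_on T"
    using E P1(1) by (rule eichler_products_on_mult)
  ultimately show ?thesis using that by blast
qed

end

section \<open>\<open>SO\<^sup>+(U\<^sup>3)\<close> is generated by elementary Eichler transformations\<close>

lemma eq_mat_1_if_fixes_all_planes:
  assumes "fixes_planes_outside {} R"
  shows "R = mat 1"
proof -
  have axis: "R *v axis i 1 = axis i 1" for i
    using assms two_cases[of "snd i"] by (cases i) (auto simp: fixes_planes_outside_def e_def f_def)
  have "R *v x = x" for x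
    by (subst (1 2) basis_expansion[symmetric])
      (simp add: matrix_vector_mult_sum matrix_vector_mult_smult axis)
  then show ?thesis
    by (simp add: matrix_eq)
qed

lemma det_swap_plane_0:
  assumes "R *v e 0 = f 0" "R *v f 0 = e 0" "fixes_planes_outside {0} R"
  shows "det R = -1"
proof -
  define \<sigma> where "\<sigma> = Transposition.transpose ((0::3), (0::2)) (0, 1)"
  have "R *v axis j 1 = axis (\<sigma> j) 1" for j
    using assms two_cases[of "snd j"]
    by (cases j) (auto simp: e_def f_def \<sigma>_def Transposition.transpose_def fixes_planes_outside_def)
  then have "R $ i $ j = (if i = \<sigma> j then 1 else 0)" for i j
    using matrix_vector_mult_axis_component[of R j i] by (simp add: axis_def)
  then have "R = (\<chi> i. mat 1 $ \<sigma> i)"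
    by (auto simp: vec_eq_iff mat_def \<sigma>_def Transposition.transpose_def)
  also have "det \<dots> = of_int (sign \<sigma>) * det (mat 1 :: U3mat)"
    by (rule det_permute_rows) (simp add: \<sigma>_def permutes_swap_id)
  finally show ?thesis
    by (simp add: \<sigma>_def sign_swap_id)
qed

lemma not_orient_preserving_if_reflects_wpos_0:
  assumes "R *v wpos 0 = - wpos 0" "\<And>k. k \<noteq> 0 \<Longrightarrow> R *v wpos k = wpos k"
  shows "\<not> orient_preserving R"
proof -
  have "bil (wpos k) (R *v wpos l) = (if k = l then if l = 0 then -2 else 2 else 0)" for k l
    using assms
    by (cases "l = 0") (simp_all add: bil_eq_hyp_form hyp_form_minus_right hyp_form_wpos)
  then have "det ((\<chi> k l. bil (wpos k) (R *v wpos l)) :: int ^ 3 ^ 3) =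
      (\<Prod>k\<in>(UNIV :: 3 set). if k = 0 then -2 else 2)"
    by (subst det_diagonal) simp_all
  also have "\<dots> = -8"
    by (simp add: prod_UNIV_3)
  finally show ?thesis
    by (simp add: orient_preserving_def)
qed

lemma SOplus_eq_mat_1_if_fixes_planes_outside_0:
  assumes R: "R \<in> SOplus_U3" and fixed: "fixes_planes_outside {0} R"
  shows "R = mat 1"
proof -
  have iso: "hyp_isometry R"
    using R by (rule hyp_isometry_if_SOplus)
  have "supported_on {0} (R *v e 0)" "supported_on {0} (R *v f 0)"
    using supported_on_image[OF iso fixed] by (simp_all add: supported_on_e_f)
  moreover have "primitive_isotropic (R *v e 0)" "primitive_isotropic (R *v f 0)"
    using primitive_isotropic_image[OF iso] primitive_isotropic_e primitive_isotropic_f by blast+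
  ultimately have "R *v e 0 \<in> {e 0, - e 0, f 0, - f 0}" "R *v f 0 \<in> {e 0, - e 0, f 0, - f 0}"
    using primitive_isotropic_in_plane by blast+
  moreover have "hyp_form (R *v e 0) (R *v f 0) = 1"
    using iso by (simp add: hyp_isometry_def e_component)
  ultimately consider "R *v e 0 = e 0 \<and> R *v f 0 = f 0" | "R *v e 0 = f 0 \<and> R *v f 0 = e 0"
    | "R *v wpos 0 = - wpos 0"
    by (auto simp: e_component f_component hyp_form_minus_left hyp_form_minus_right wpos_def
        matrix_vector_right_distrib)
  then show ?thesis
  proof cases
    case 1
    then have "fixes_planes_outside {} R"
      using fixed unfolding fixes_planes_outside_def by (metis singleton_iff)
    then show ?thesis by (rule eq_mat_1_if_fixes_all_planes)
  next
    case 2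
    then have "det R = -1"
      using det_swap_plane_0 fixed by blast
    then show ?thesis
      using R by (simp add: mem_SOplus_U3_iff)
  next
    case 3
    moreover have "R *v wpos k = wpos k" if "k \<noteq> 0" for k
      using fixed that by (simp add: fixes_planes_outside_def wpos_def matrix_vector_right_distrib)
    ultimately have "\<not> orient_preserving R"
      by (rule not_orient_preserving_if_reflects_wpos_0)
    then show ?thesis
      using R by (simp add: mem_SOplus_U3_iff)
  qed
qed

lemma SOplus_subset_eichler_products: "SOplus_U3 \<subseteq> eichler_products"
proof
  fix A
  assume A: "A \<in> SOplus_U3"
  interpret plane_1: isotropic_descent UNIV 1
    by unfold_locales simp_all
  interpret plane_2: isotropic_descent "{0, 2}" 2
    by unfold_locales simp_all
  obtain P1 where P1: "P1 \<in> eichler_products_on UNIV" "fixes_planes_outside (UNIV - {1}) (P1 ** A)"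
    using plane_1.exists_eichler_product_fixing_plane[of A] hyp_isometry_if_SOplus[OF A]
    by (auto simp: fixes_planes_outside_def)
  have "(1::3) \<noteq> 0" "(1::3) \<noteq> 2" "(2::3) \<noteq> 0" by simp_all
  then have "UNIV - {1} = {0, 2::3}" "{0, 2} - {2} = {0::3}"
    unfolding UNIV_3 by auto
  then obtain P2 where P2: "P2 \<in> eichler_products_on {0, 2}"
    "fixes_planes_outside {0} (P2 ** (P1 ** A))"
    using plane_2.exists_eichler_product_fixing_plane[of "P1 ** A"] P1 A
    by (auto simp: hyp_isometry_mult hyp_isometry_if_SOplus eichler_products_on_isometry)
  define P where "P = P2 ** P1"
  have P: "P \<in> eichler_products"
    using P1(1) P2(1) by (simp add: P_def eichler_products_on_def eichler_products_mult)
  have "P ** A = mat 1"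
    using P2(2) eichler_products_mult_mem_SOplus[OF P A]
    by (intro SOplus_eq_mat_1_if_fixes_planes_outside_0) (simp_all add: P_def matrix_mul_assoc)
  moreover obtain Q where "Q \<in> eichler_products" "Q ** P = mat 1"
    using eichler_products_inverse[OF P] by blast
  ultimately show "A \<in> eichler_products"
    by (metis matrix_mul_assoc matrix_mul_lid matrix_mul_rid)
qed

lemma group_SOplus_group: "group SOplus_group"
proof -
  have closed: "A ** B \<in> SOplus_U3" if "A \<in> SOplus_U3" "B \<in> SOplus_U3" for A B
  proof -
    have "A \<in> eichler_products"
      using SOplus_subset_eichler_products that(1) ..
    then show ?thesis
      using that(2) by (rule eichler_products_mult_mem_SOplus)
  qed
  have inverse: "\<exists>Q \<in> SOplus_U3. Q ** A = mat 1" if "A \<in> SOplus_U3" for A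
  proof -
    have "A \<in> eichler_products"
      using SOplus_subset_eichler_products that ..
    then obtain Q where "Q \<in> eichler_products" "Q ** A = mat 1"
      using eichler_products_inverse by blast
    then show ?thesis
      using eichler_products_subset_SOplus by blast
  qed
  show ?thesis
    by (rule groupI)
      (simp_all add: SOplus_group_def matrix_mul_assoc mat_1_mem_SOplus closed inverse)
qed

section \<open>Elementary Eichler transformations as products of stabiliser elements\<close>

lemma eichler_mat_mem_SOplus_stab:
  assumes "hyp_quad u = 0" "hyp_form u z = 0" "hyp_form s u = 0" "hyp_form s z = 0"
  shows "eichler_mat u z \<in> SOplus_stab s"
  using eichler_mat_mult_mem_SOplus[OF assms(1,2) mat_1_mem_SOplus] eichler_fixed[OF assms(3,4)]
  by (simp add: SOplus_stab_def)

lemma eichler_mat_add_mem_generate: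
  assumes "hyp_quad u = 0" "hyp_form u y = 0" "hyp_form u z = 0"
    and "eichler_mat u y \<in> generate SOplus_group H" "eichler_mat u z \<in> generate SOplus_group H"
  shows "eichler_mat u (y + z) \<in> generate SOplus_group H"
  using generate.eng[OF assms(4,5)] by (simp add: SOplus_group_def eichler_mat_mult[OF assms(1-3)])

lemma elementary_eichler_mem_generate:
  fixes d :: int
  assumes "elementary_eichler u x"
  shows "eichler_mat u x \<in> generate SOplus_group
           (SOplus_stab (e 0 + d *s f 0) \<union> SOplus_stab (d *s e 0 + f 0)
            \<union> SOplus_stab (e 0 + (d + 1) *s f 0) \<union> SOplus_stab ((d + 1) *s e 0 + f 0))"
    (is "_ \<in> generate _ ?H")
proof -
  obtain k where k: "k \<noteq> 0" "u = e k \<or> u = f k" "x $ (k, 0) = 0" "x $ (k, 1) = 0"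
    using assms unfolding elementary_eichler_def by blast
  define a b where "a = x $ (0, 0)" and "b = x $ (0, 1)"
  define r where "r = (\<chi> i. if fst i = 0 then 0 else x $ i)"
  define y1 y2 y3 y4 where "y1 = a *s ((d + 1) *s e 0 - f 0)" and "y2 = (- a) *s (d *s e 0 - f 0)"
    and "y3 = b *s (e 0 - d *s f 0)" and "y4 = (- b) *s (e 0 - (d + 1) *s f 0)"
  have x: "x = r + y1 + y2 + y3 + y4"
    unfolding vec_eq_iff
  proof
    fix i :: "3 \<times> 2"
    show "x $ i = (r + y1 + y2 + y3 + y4) $ i"
      using two_cases[of "snd i"]
      by (cases i) (auto simp: r_def y1_def y2_def y3_def y4_def e_component f_component a_def b_def
          algebra_simps)
  qed
  have qu: "hyp_quad u = 0"
    using k(2) by auto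
  have orth_u: "hyp_form w u = 0" "hyp_form u w = 0" if "w $ (k, 0) = 0" "w $ (k, 1) = 0" for w
    using k(2) that hyp_form_commute[of u w] by auto
  have plane_0: "w $ (k, 0) = 0 \<and> w $ (k, 1) = 0" if "w \<in> {r, y1, y2, y3, y4}" for w
    using that k(1,3,4) by (auto simp: r_def y1_def y2_def y3_def y4_def e_component f_component)
  have plane_0': "s $ (k, 0) = 0" "s $ (k, 1) = 0" if "s \<in> {e 0 + d *s f 0, d *s e 0 + f 0,
      e 0 + (d + 1) *s f 0, (d + 1) *s e 0 + f 0}" for s
    using that k(1) by (auto simp: e_component f_component)
  have stab: "eichler_mat u w \<in> SOplus_stab s"
    if "w \<in> {r, y1, y2, y3, y4}" and "hyp_form s w = 0"
      and "s \<in> {e 0 + d *s f 0, d *s e 0 + f 0, e 0 + (d + 1) *s f 0, (d + 1) *s e 0 + f 0}"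
    for w s
    using that plane_0[OF that(1)] plane_0'[OF that(3)]
    by (intro eichler_mat_mem_SOplus_stab qu orth_u) simp_all
  have "hyp_form (e 0 + d *s f 0) r = 0" "hyp_form ((d + 1) *s e 0 + f 0) y1 = 0"
    "hyp_form (d *s e 0 + f 0) y2 = 0" "hyp_form (e 0 + d *s f 0) y3 = 0"
    "hyp_form (e 0 + (d + 1) *s f 0) y4 = 0"
    by (simp_all add: r_def y1_def y2_def y3_def y4_def hyp_form_linear e_component f_component
        algebra_simps)
  then have "eichler_mat u w \<in> generate SOplus_group ?H" if "w \<in> {r, y1, y2, y3, y4}" for w
    using that stab by (blast intro: generate.incl)
  moreover have "hyp_form u w = 0" if "w \<in> {r, y1, y2, y3, y4}" for w
    using that plane_0 orth_u by blast
  ultimately show ?thesis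
    unfolding x using qu by (simp add: eichler_mat_add_mem_generate hyp_form_add_right)
qed

lemma eichler_products_subset_generate:
  "eichler_products \<subseteq> generate SOplus_group
     (SOplus_stab (e 0 + d *s f 0) \<union> SOplus_stab (d *s e 0 + f 0)
      \<union> SOplus_stab (e 0 + (d + 1) *s f 0) \<union> SOplus_stab ((d + 1) *s e 0 + f 0))"
    (is "_ \<subseteq> generate _ ?H")
proof
  fix P
  assume "P \<in> eichler_products"
  then show "P \<in> generate SOplus_group ?H"
  proof (induction rule: eichler_products.induct)
    case mat_1
    then show ?case using generate.one[of SOplus_group] by (simp add: SOplus_group_def)
  next
    case (mult u x P)
    then show ?case
      using generate.eng[OF elementary_eichler_mem_generate[OF mult(1)] mult(3)]
      by (simp add: SOplus_group_def)
  qed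
qed

theorem lemma3:
  fixes d :: int
  assumes "d \<ge> 1"
  shows "generate SOplus_group
           (SOplus_stab (e 0 + d *s f 0) \<union> SOplus_stab (d *s e 0 + f 0)
            \<union> SOplus_stab (e 0 + (d + 1) *s f 0) \<union> SOplus_stab ((d + 1) *s e 0 + f 0))
         = carrier SOplus_group"
    (is "generate _ ?H = _")
proof
  have "?H \<subseteq> carrier SOplus_group"
    by (auto simp: SOplus_stab_def SOplus_group_def)
  then show "generate SOplus_group ?H \<subseteq> carrier SOplus_group"
    by (rule group.generate_incl[OF group_SOplus_group])
  have "carrier SOplus_group = SOplus_U3"
    by (simp add: SOplus_group_def)
  then show "carrier SOplus_group \<subseteq> generate SOplus_group ?H"
    using SOplus_subset_eichler_products eichler_products_subset_generate
    by (simp only: subset_trans)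
qed

end
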